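(* Let $K\ge L\ge T\ge 2$, let $x$ be a positive integer coprime to $q$, and let $\mathrm{CAT}_x(K,L,T)$, $y$, $q$ be as in the context. Suppose that $ix\not\equiv jy\pmod q$ for all integer pairs $(i,j)$ with (1) $i\in\{-L,\dots,-1\}$, $j\in\{-K-T+2,\dots,K-1\}$, or (2) $i\in\{-L+1,\dots,T+L-2\}$, $j\in\{-K,\dots,-1\}$, or (3) $i\in\{-L,\dots,T-2\}$, $j\in\{-K-T+1,\dots,-1\}$. Then $|\mathcal{TL}|=KL$ and $\mathcal{TL}\cap\mathcal{TR}=\mathcal{TL}\cap\mathcal{BL}=\mathcal{TL}\cap\mathcal{BR}=\emptyset$.
   Context: Let $\kappa,\lambda$ be the smallest non-negative integers such that $K+1+\kappa$ and $L+1+\lambda$ are coprime to $T-1$; $K^\star=K+1+\kappa$, $L^\star=L+1+\lambda$, $\bar T=T-1$, $q=K^\star L^\star+\bar T^2$. For $x$ coprime to $q$, $y\in\{0,\dots,q-1\}$ is the unique integer with $x\bar T+yK^\star\equiv0\pmod q$. $\mathrm{CAT}_x(K,L,T)$ consists of $q$ and the vectors over $\mathbb{Z}_q$: $\boldsymbol{\alpha}^{(p)}=(ky)_{k=0}^{K-1}$, $\boldsymbol{\alpha}^{(s)}=(Ky+kx)_{k=0}^{T-1}$, $\boldsymbol{\beta}^{(p)}=(kx)_{k=0}^{L-1}$, $\boldsymbol{\beta}^{(s)}=(ky-x)_{k=0}^{T-1}$, all mod $q$. With $\{\mathbf v\}$ the set of entries and sumsets in $\mathbb{Z}_q$: $\mathcal{TL}=\{\boldsymbol{\alpha}^{(p)}\}+\{\boldsymbol{\beta}^{(p)}\}$,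 $\mathcal{TR}=\{\boldsymbol{\alpha}^{(p)}\}+\{\boldsymbol{\beta}^{(s)}\}$, $\mathcal{BL}=\{\boldsymbol{\alpha}^{(s)}\}+\{\boldsymbol{\beta}^{(p)}\}$, $\mathcal{BR}=\{\boldsymbol{\alpha}^{(s)}\}+\{\boldsymbol{\beta}^{(s)}\}$. *)

theory Defs
  imports "HOL-Number_Theory.Number_Theory"
begin

(* Parameters K, L, T are natural numbers; arithmetic in Z_q is modelled by int mod q. *)

definition Tbar :: "nat \<Rightarrow> int" where
  "Tbar T = int T - 1"

definition kappa :: "nat \<Rightarrow> nat \<Rightarrow> nat" where
  "kappa K T = (LEAST k::nat. coprime (int K + 1 + int k) (Tbar T))"

definition Kstar :: "nat \<Rightarrow> nat \<Rightarrow> int" where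
  "Kstar K T = int K + 1 + int (kappa K T)"

(* lambda for L is kappa applied to L *)
definition Lstar :: "nat \<Rightarrow> nat \<Rightarrow> int" where
  "Lstar L T = int L + 1 + int (kappa L T)"

definition qq :: "nat \<Rightarrow> nat \<Rightarrow> nat \<Rightarrow> int" where
  "qq K L T = Kstar K T * Lstar L T + (Tbar T)^2"

definition yy :: "nat \<Rightarrow> nat \<Rightarrow> nat \<Rightarrow> int \<Rightarrow> int" where
  "yy K L T x = (THE y. 0 \<le> y \<and> y < qq K L T \<and>
       [x * Tbar T + y * Kstar K T = 0] (mod qq K L T))"

(* entries of the four CAT_x(K,L,T) vectors, reduced mod q *)
definition alpha_p :: "nat \<Rightarrow> nat \<Rightarrow> nat \<Rightarrow> int \<Rightarrow> int set" where
  "alpha_p K L T x = (\<lambda>k. (int k * yy K L T x) mod qq K L T) ` {0..<K}"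

definition alpha_s :: "nat \<Rightarrow> nat \<Rightarrow> nat \<Rightarrow> int \<Rightarrow> int set" where
  "alpha_s K L T x = (\<lambda>k. (int K * yy K L T x + int k * x) mod qq K L T) ` {0..<T}"

definition beta_p :: "nat \<Rightarrow> nat \<Rightarrow> nat \<Rightarrow> int \<Rightarrow> int set" where
  "beta_p K L T x = (\<lambda>k. (int k * x) mod qq K L T) ` {0..<L}"

definition beta_s :: "nat \<Rightarrow> nat \<Rightarrow> nat \<Rightarrow> int \<Rightarrow> int set" where
  "beta_s K L T x = (\<lambda>k. (int k * yy K L T x - x) mod qq K L T) ` {0..<T}"

definition sumset_mod :: "int \<Rightarrow> int set \<Rightarrow> int set \<Rightarrow> int set" where
  "sumset_mod q A B = {(a + b) mod q | a b. a \<in> A \<and> b \<in> B}"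

definition TL :: "nat \<Rightarrow> nat \<Rightarrow> nat \<Rightarrow> int \<Rightarrow> int set" where
  "TL K L T x = sumset_mod (qq K L T) (alpha_p K L T x) (beta_p K L T x)"
definition TR :: "nat \<Rightarrow> nat \<Rightarrow> nat \<Rightarrow> int \<Rightarrow> int set" where
  "TR K L T x = sumset_mod (qq K L T) (alpha_p K L T x) (beta_s K L T x)"
definition BL :: "nat \<Rightarrow> nat \<Rightarrow> nat \<Rightarrow> int \<Rightarrow> int set" where
  "BL K L T x = sumset_mod (qq K L T) (alpha_s K L T x) (beta_p K L T x)"
definition BR :: "nat \<Rightarrow> nat \<Rightarrow> nat \<Rightarrow> int \<Rightarrow> int set" where
  "BR K L T x = sumset_mod (qq K L T) (alpha_s K L T x) (beta_s K L T x)"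

end

theory Submission
  imports Defs
begin

(* Every element of TL is a y + b x mod q with 0 <= a < K and 0 <= b < L. Two
   such representations of the same residue, or a coincidence with an element of TR, BL or BR,
   subtract to a congruence i x = j y (mod q) with (i, j) in one of the three excluded boxes.
   Only these box conditions and 2 <= T <= L enter. *)

lemma cong_iff_of_diff_eq:
  fixes a b c d m :: "'a :: unique_euclidean_ring"
  assumes "a - b = c - d"
  shows "[a = b] (mod m) \<longleftrightarrow> [c = d] (mod m)"
  using assms by (simp add: cong_iff_dvd_diff)

lemma mem_sumset_mod_image:
  "z \<in> sumset_mod q ((\<lambda>a. f a mod q) ` A) ((\<lambda>b. g b mod q) ` B)
     \<longleftrightarrow> (\<exists>a\<in>A. \<exists>b\<in>B. z = (f a + g b) mod q)"
proof
  assume "z \<in> sumset_mod q ((\<lambda>a. f a mod q) ` A) ((\<lambda>b. g b mod q) ` B)"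
  then obtain a b where "a \<in> A" "b \<in> B" "z = (f a mod q + g b mod q) mod q"
    unfolding sumset_mod_def by blast
  then show "\<exists>a\<in>A. \<exists>b\<in>B. z = (f a + g b) mod q"
    by (metis mod_add_eq)
next
  assume "\<exists>a\<in>A. \<exists>b\<in>B. z = (f a + g b) mod q"
  then obtain a b where "a \<in> A" "b \<in> B" "z = (f a mod q + g b mod q) mod q"
    by (auto simp: mod_add_eq)
  then show "z \<in> sumset_mod q ((\<lambda>a. f a mod q) ` A) ((\<lambda>b. g b mod q) ` B)"
    unfolding sumset_mod_def by blast
qed

lemma sumset_mod_image_eq:
  "sumset_mod q ((\<lambda>a. f a mod q) ` A) ((\<lambda>b. g b mod q) ` B)
     = (\<lambda>(a, b). (f a + g b) mod q) ` (A \<times> B)"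
  by (auto simp: set_eq_iff mem_sumset_mod_image)

lemma sumset_mod_images_disjoint:
  assumes "\<And>a b c d. a \<in> A \<Longrightarrow> b \<in> B \<Longrightarrow> c \<in> C \<Longrightarrow> d \<in> D
             \<Longrightarrow> \<not> [h c + k d = f a + g b] (mod q)"
  shows "sumset_mod q ((\<lambda>a. f a mod q) ` A) ((\<lambda>b. g b mod q) ` B)
       \<inter> sumset_mod q ((\<lambda>c. h c mod q) ` C) ((\<lambda>d. k d mod q) ` D) = {}"
  using assms by (fastforce simp: mem_sumset_mod_image cong_def)

lemma inj_on_mod_lattice:
  fixes x y q :: int
  assumes box: "\<And>i j. i \<in> {1 - int L..-1} \<Longrightarrow> j \<in> {1 - int K..int K - 1}
                  \<Longrightarrow> \<not> [i * x = j * y] (mod q)"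
    and axis: "\<And>j. j \<in> {1 - int K..-1} \<Longrightarrow> \<not> [j * y = 0] (mod q)"
  shows "inj_on (\<lambda>(a, b). (int a * y + int b * x) mod q) ({0..<K} \<times> {0..<L})"
proof -
  have distinct_b: "\<not> [int a * y + int b * x = int c * y + int d * x] (mod q)"
    if "a < K" "c < K" "b < d" "d < L" for a b c d
  proof -
    have "\<not> [(int b - int d) * x = (int c - int a) * y] (mod q)"
      using that by (intro box) auto
    moreover have "int a * y + int b * x - (int c * y + int d * x)
                     = (int b - int d) * x - (int c - int a) * y"
      by (simp add: algebra_simps)
    ultimately show ?thesis
      using cong_iff_of_diff_eq by blast
  qed
  have distinct_a: "\<not> [int a * y + int b * x = int c * y + int b * x] (mod q)"
    if "a < c" "c < K" for a b c
  proof -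
    have "\<not> [(int a - int c) * y = 0] (mod q)"
      using that by (intro axis) auto
    moreover have "int a * y + int b * x - (int c * y + int b * x) = (int a - int c) * y - 0"
      by (simp add: algebra_simps)
    ultimately show ?thesis
      using cong_iff_of_diff_eq by blast
  qed
  show ?thesis
  proof (rule inj_onI, clarsimp)
    fix a b c d
    assume ranges: "a < K" "b < L" "c < K" "d < L"
      and "(int a * y + int b * x) mod q = (int c * y + int d * x) mod q"
    then have eq: "[int a * y + int b * x = int c * y + int d * x] (mod q)"
      by (simp add: cong_def)
    have "b = d"
      using distinct_b[of a c b d] distinct_b[of c a d b] eq ranges
      by (metis cong_sym linorder_neqE_nat)
    moreover have "a = c"
      using distinct_a[of a c b] distinct_a[of c a b] eq ranges \<open>b = d\<close>
      by (metis cong_sym linorder_neqE_nat)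
    ultimately show "a = c \<and> b = d" by simp
  qed
qed

lemma card_sumset_mod_lattice:
  fixes x y q :: int
  assumes "\<And>i j. i \<in> {1 - int L..-1} \<Longrightarrow> j \<in> {1 - int K..int K - 1}
             \<Longrightarrow> \<not> [i * x = j * y] (mod q)"
    and "\<And>j. j \<in> {1 - int K..-1} \<Longrightarrow> \<not> [j * y = 0] (mod q)"
  shows "card (sumset_mod q ((\<lambda>a. (int a * y) mod q) ` {0..<K})
                            ((\<lambda>b. (int b * x) mod q) ` {0..<L})) = K * L"
  using card_image[OF inj_on_mod_lattice[OF assms]]
  by (simp add: sumset_mod_image_eq card_cartesian_product)

lemma TL_TR_no_collision:
  fixes x y q :: int
  assumes "\<And>i j. i \<in> {- int L..-1} \<Longrightarrow> j \<in> {- int K - int T + 2..int K - 1}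
             \<Longrightarrow> \<not> [i * x = j * y] (mod q)"
    and "a < K" "b < L" "c < K" "k < T"
  shows "\<not> [int c * y + (int k * y - x) = int a * y + int b * x] (mod q)"
proof -
  have "\<not> [(- int b - 1) * x = (int a - int c - int k) * y] (mod q)"
    using assms by auto
  moreover have "int c * y + (int k * y - x) - (int a * y + int b * x)
                   = (- int b - 1) * x - (int a - int c - int k) * y"
    by (simp add: algebra_simps)
  ultimately show ?thesis
    using cong_iff_of_diff_eq by blast
qed

lemma TL_BL_no_collision:
  fixes x y q :: int
  assumes "\<And>i j. i \<in> {- int L + 1..int T + int L - 2} \<Longrightarrow> j \<in> {- int K..-1}
             \<Longrightarrow> \<not> [i * x = j * y] (mod q)"
    and "a < K" "b < L" "k < T" "c < L"
  shows "\<not> [(int K * y + int k * x) + int c * x = int a * y + int b * x] (mod q)"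
proof -
  have "\<not> [(int k + int c - int b) * x = (int a - int K) * y] (mod q)"
    using assms by auto
  moreover have "(int K * y + int k * x) + int c * x - (int a * y + int b * x)
                   = (int k + int c - int b) * x - (int a - int K) * y"
    by (simp add: algebra_simps)
  ultimately show ?thesis
    using cong_iff_of_diff_eq by blast
qed

lemma TL_BR_no_collision:
  fixes x y q :: int
  assumes "\<And>i j. i \<in> {- int L..int T - 2} \<Longrightarrow> j \<in> {- int K - int T + 1..-1}
             \<Longrightarrow> \<not> [i * x = j * y] (mod q)"
    and "a < K" "b < L" "k < T" "m < T"
  shows "\<not> [(int K * y + int k * x) + (int m * y - x) = int a * y + int b * x] (mod q)"
proof -
  have "\<not> [(int k - 1 - int b) * x = (int a - int K - int m) * y] (mod q)"
    using assms by auto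
  moreover have "(int K * y + int k * x) + (int m * y - x) - (int a * y + int b * x)
                   = (int k - 1 - int b) * x - (int a - int K - int m) * y"
    by (simp add: algebra_simps)
  ultimately show ?thesis
    using cong_iff_of_diff_eq by blast
qed

theorem lemma4:
  fixes K L T :: nat and x :: int
  assumes "K \<ge> L" and "L \<ge> T" and "T \<ge> 2"
    and "x > 0" and "coprime x (qq K L T)"
    and "\<And>i j :: int.
      (i \<in> {- int L .. -1} \<and> j \<in> {- int K - int T + 2 .. int K - 1}) \<or>
      (i \<in> {- int L + 1 .. int T + int L - 2} \<and> j \<in> {- int K .. -1}) \<or>
      (i \<in> {- int L .. int T - 2} \<and> j \<in> {- int K - int T + 1 .. -1})
      \<Longrightarrow> \<not> [i * x = j * yy K L T x] (mod qq K L T)"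
  shows "card (TL K L T x) = K * L \<and>
         TL K L T x \<inter> TR K L T x = {} \<and>
         TL K L T x \<inter> BL K L T x = {} \<and>
         TL K L T x \<inter> BR K L T x = {}"
proof -
  let ?q = "qq K L T" and ?y = "yy K L T x"
  have box1: "\<not> [i * x = j * ?y] (mod ?q)"
    if "i \<in> {- int L..-1}" "j \<in> {- int K - int T + 2..int K - 1}" for i j
    using assms(6) that by blast
  have box2: "\<not> [i * x = j * ?y] (mod ?q)"
    if "i \<in> {- int L + 1..int T + int L - 2}" "j \<in> {- int K..-1}" for i j
    using assms(6) that by blast
  have box3: "\<not> [i * x = j * ?y] (mod ?q)"
    if "i \<in> {- int L..int T - 2}" "j \<in> {- int K - int T + 1..-1}" for i j
    using assms(6) that by blast
  have "card (TL K L T x) = K * L"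
    unfolding TL_def alpha_p_def beta_p_def
  proof (rule card_sumset_mod_lattice)
    show "\<not> [i * x = j * ?y] (mod ?q)"
      if "i \<in> {1 - int L..-1}" "j \<in> {1 - int K..int K - 1}" for i j
      using that assms(3) by (intro box1) auto
    show "\<not> [j * ?y = 0] (mod ?q)" if "j \<in> {1 - int K..-1}" for j
      using box2[of 0 j] that assms(2,3) by (auto simp: cong_sym_eq)
  qed
  moreover have "TL K L T x \<inter> TR K L T x = {}"
    unfolding TL_def TR_def alpha_p_def beta_p_def beta_s_def
    by (intro sumset_mod_images_disjoint TL_TR_no_collision[OF box1]) auto
  moreover have "TL K L T x \<inter> BL K L T x = {}"
    unfolding TL_def BL_def alpha_p_def alpha_s_def beta_p_def
    by (intro sumset_mod_images_disjoint TL_BL_no_collision[OF box2]) auto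
  moreover have "TL K L T x \<inter> BR K L T x = {}"
    unfolding TL_def BR_def alpha_p_def alpha_s_def beta_p_def beta_s_def
    by (intro sumset_mod_images_disjoint TL_BR_no_collision[OF box3]) auto
  ultimately show ?thesis by blast
qed

end
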